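(* Let $f$ be a multiplicative function with $f(n)=o(n^\delta)$ for some $\delta>0$, and let $\sigma>\delta$. Then for all but finitely many primes $p$, the series $\sum_{n=0}^\infty\frac{|D_f(n,p)|}{p^{n\sigma}}$ is convergent, and these sums are bounded uniformly in $p$.
   Context: For a prime $p$ and integer $k\ge1$, $D_f(k,p)$ is the determinant of the $k\times k$ matrix $(a_{ij})$ with $a_{ij}=f(p^{i-j+1})$ if $i-j+1\ge0$ and $a_{ij}=0$ otherwise; $D_f(0,p)=1$. *)

theory Defs
  imports Complex_Main "HOL-Library.Landau_Symbols" "HOL-Computational_Algebra.Primes"
    "Jordan_Normal_Form.Determinant"
begin

definition multiplicative_fun :: "(nat \<Rightarrow> complex) \<Rightarrow> bool" where
  "multiplicative_fun f \<longleftrightarrow> f 1 = 1 \<and>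
     (\<forall>m n. m > 0 \<longrightarrow> n > 0 \<longrightarrow> coprime m n \<longrightarrow> f (m * n) = f m * f n)"

definition D_mat :: "(nat \<Rightarrow> complex) \<Rightarrow> nat \<Rightarrow> nat \<Rightarrow> complex mat" where
  "D_mat f k p = mat k k (\<lambda>(i, j). if int i - int j + 1 \<ge> 0
                                     then f (p ^ nat (int i - int j + 1)) else 0)"

definition D :: "(nat \<Rightarrow> complex) \<Rightarrow> nat \<Rightarrow> nat \<Rightarrow> complex" where
  "D f k p = det (D_mat f k p)"

lemma D_0: "D f 0 p = 1"
  unfolding D_def D_mat_def by (simp add: det_def)

end

theory Submission
  imports Defs "HOL-Real_Asymp.Real_Asymp"
begin

text \<open>Expanding D f (k+1) p along its last row expresses it through D f j p, j \<le> k, with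
  coefficients f(p^(k+1-j)). If |f(p^m)| \<le> x^m for all m \<ge> 1, induction on this recurrence
  gives |D f k p| \<le> (2x)^k. Since f(n) = o(n^\<delta>), this holds with x = p^\<delta> for all large p,
  so the series is dominated by the geometric series with ratio 2 p^(\<delta>-\<sigma>) \<le> 1/2, which
  for large p sums to at most 2.\<close>

text \<open>Deleting the last row and column j leaves a block lower triangular matrix whose upper-left
  block is D_mat f j p and whose lower-right block has diagonal entries f(p^0) = 1.\<close>
lemma det_D_mat_delete_last_row:
  assumes "j \<le> n" and "f 1 = 1"
  shows "det (mat_delete (D_mat f (Suc n) p) n j) = D f j p"
proof -
  define M where "M = mat_delete (D_mat f (Suc n) p) n j"
  have entry: "M $$ (r, c) =
      (let c' = (if c < j then c else Suc c)
       in if int r - int c' + 1 \<ge> 0 then f (p ^ nat (int r - int c' + 1)) else 0)"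
    if "r < n" "c < n" for r c
    using that by (simp add: M_def mat_delete_def D_mat_def Let_def)
  have dims: "dim_row M = j + (n - j)" "dim_col M = j + (n - j)"
    using assms(1) by (auto simp: M_def D_mat_def)
  define A1 where "A1 = mat j j (\<lambda>ij. M $$ ij)"
  define A2 where "A2 = mat j (n - j) (\<lambda>(i, k). M $$ (i, k + j))"
  define A3 where "A3 = mat (n - j) j (\<lambda>(i, k). M $$ (i + j, k))"
  define A4 where "A4 = mat (n - j) (n - j) (\<lambda>(i, k). M $$ (i + j, k + j))"
  have "split_block M j j = (A1, A2, A3, A4)"
    unfolding split_block_def Let_def A1_def A2_def A3_def A4_def using dims by simp
  note blocks = split_block[OF this dims]
  have A1: "A1 = D_mat f j p"
    using assms(1) unfolding A1_def by (auto simp: D_mat_def entry intro!: eq_matI)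
  have A2: "A2 = 0\<^sub>m j (n - j)"
    using assms(1) unfolding A2_def by (auto simp: entry intro!: eq_matI)
  have "det A4 = prod_list (diag_mat A4)"
    by (rule det_lower_triangular[OF _ blocks(4)]) (use assms(1) in \<open>auto simp: A4_def entry\<close>)
  also have "\<dots> = 1"
    unfolding prod_list_diag_prod using assms by (auto simp: A4_def entry intro!: prod.neutral)
  finally have A4: "det A4 = 1" .
  have "det M = det A1 * det A4"
    using blocks(5) det_four_block_mat_upper_right_zero[OF blocks(1) A2 blocks(3) blocks(4)]
    by simp
  then show ?thesis using A1 A4 by (simp add: D_def M_def)
qed

lemma D_Suc:
  assumes "f 1 = 1"
  shows "D f (Suc n) p = (\<Sum>j<Suc n. f (p ^ (Suc n - j)) * ((-1) ^ (n + j) * D f j p))"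
proof -
  let ?A = "D_mat f (Suc n) p"
  have "D f (Suc n) p = (\<Sum>j<Suc n. ?A $$ (n, j) * cofactor ?A n j)"
    unfolding D_def by (rule laplace_expansion_row) (simp_all add: D_mat_def)
  also have "\<dots> = (\<Sum>j<Suc n. f (p ^ (Suc n - j)) * ((-1) ^ (n + j) * D f j p))"
  proof (rule sum.cong[OF refl])
    fix j assume "j \<in> {..<Suc n}"
    then have j: "j \<le> n" by simp
    then have "nat (int n - int j + 1) = Suc n - j" by simp
    with j show "?A $$ (n, j) * cofactor ?A n j = f (p ^ (Suc n - j)) * ((-1) ^ (n + j) * D f j p)"
      using det_D_mat_delete_last_row[of j n f p, OF j assms] by (simp add: D_mat_def cofactor_def)
  qed
  finally show ?thesis .
qed

lemma norm_D_le:
  assumes "f 1 = 1" and "x \<ge> 0" and f_bound: "\<And>m. m \<ge> 1 \<Longrightarrow> norm (f (p ^ m)) \<le> x ^ m"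
  shows "norm (D f k p) \<le> (2 * x) ^ k"
proof (induction k rule: less_induct)
  case (less k)
  show ?case
  proof (cases k)
    case 0
    then show ?thesis by (simp add: D_0)
  next
    case (Suc n)
    have "norm (D f k p) \<le> (\<Sum>j<Suc n. norm (f (p ^ (Suc n - j))) * norm (D f j p))"
      unfolding Suc D_Suc[of f n p, OF assms(1)]
      by (rule order.trans[OF norm_sum]) (simp add: norm_mult norm_power)
    also have "\<dots> \<le> (\<Sum>j<Suc n. x ^ (Suc n - j) * (2 * x) ^ j)"
      using Suc assms(2) by (intro sum_mono mult_mono f_bound less.IH) auto
    also have "\<dots> = (\<Sum>j<Suc n. x ^ Suc n * 2 ^ j)"
    proof (rule sum.cong[OF refl])
      fix j assume "j \<in> {..<Suc n}"
      then have "x ^ Suc n = x ^ (Suc n - j) * x ^ j"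
        by (simp flip: power_add)
      then show "x ^ (Suc n - j) * (2 * x) ^ j = x ^ Suc n * 2 ^ j"
        by (simp add: power_mult_distrib)
    qed
    also have "\<dots> = x ^ Suc n * (2 ^ Suc n - 1)"
      by (simp add: sum_distrib_left[symmetric] sum_gp_strict)
    also have "\<dots> \<le> (2 * x) ^ k"
      using assms(2) Suc by (simp add: power_mult_distrib algebra_simps)
    finally show ?thesis .
  qed
qed

lemma summable_D_series_le_2:
  fixes y :: real
  assumes "f 1 = 1" and "x > 0" and "\<And>m. m \<ge> 1 \<Longrightarrow> norm (f (p ^ m)) \<le> x ^ m"
    and "4 * x \<le> y"
  shows "summable (\<lambda>n. norm (D f n p) / y ^ n) \<and> (\<Sum>n. norm (D f n p) / y ^ n) \<le> 2"
proof -
  define q where "q = 2 * x / y"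
  have y: "y > 0" using assms(2,4) by simp
  have q: "0 \<le> q" "q \<le> 1 / 2"
    using assms(2,4) y by (auto simp: q_def field_simps)
  have term_le: "norm (D f n p) / y ^ n \<le> q ^ n" for n
    using norm_D_le[of f x p n] assms(1-3) y
    by (simp add: q_def power_divide divide_right_mono)
  have geometric: "summable (\<lambda>n. q ^ n)"
    using q by (intro summable_geometric) simp
  have summable: "summable (\<lambda>n. norm (D f n p) / y ^ n)"
    using term_le y by (intro summable_comparison_test[OF _ geometric]) auto
  have "(\<Sum>n. norm (D f n p) / y ^ n) \<le> (\<Sum>n. q ^ n)"
    using term_le by (intro suminf_le[OF _ summable geometric]) auto
  also have "\<dots> = 1 / (1 - q)"
    using q by (intro suminf_geometric) simp
  also have "\<dots> \<le> 2"
    using q by (simp add: field_simps)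
  finally show ?thesis using summable by simp
qed

lemma norm_f_power_le:
  assumes f_bound: "\<And>n. n \<ge> N \<Longrightarrow> norm (f n) \<le> real n powr \<delta>"
    and "p \<ge> N" and "p \<ge> 1" and "m \<ge> 1"
  shows "norm (f (p ^ m)) \<le> (real p powr \<delta>) ^ m"
proof -
  have "p ^ m \<ge> p" using assms(3,4) by (simp add: self_le_power)
  then have "norm (f (p ^ m)) \<le> real (p ^ m) powr \<delta>"
    using f_bound[of "p ^ m"] assms(2) by linarith
  also have "\<dots> = (real p powr \<delta>) ^ m"
    using assms(3) by (simp add: powr_power powr_realpow[symmetric] powr_powr mult.commute)
  finally show ?thesis .
qed

theorem lemma5:
  fixes f :: "nat \<Rightarrow> complex" and \<delta> \<sigma> :: real
  assumes "multiplicative_fun f"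
    and "\<delta> > 0"
    and "(\<lambda>n. norm (f n)) \<in> o(\<lambda>n. real n powr \<delta>)"
    and "\<sigma> > \<delta>"
  shows "\<exists>S :: nat set. finite S \<and> (\<exists>B :: real. \<forall>p. prime p \<and> p \<notin> S \<longrightarrow>
           summable (\<lambda>n. norm (D f n p) / real p powr (real n * \<sigma>)) \<and>
           (\<Sum>n. norm (D f n p) / real p powr (real n * \<sigma>)) \<le> B)"
proof -
  have f1: "f 1 = 1" using assms(1) by (simp add: multiplicative_fun_def)
  have "eventually (\<lambda>n. norm (norm (f n)) \<le> 1 * norm (real n powr \<delta>)) at_top"
    using assms(3) by (intro landau_o.smallD) simp_all
  then obtain N where N: "\<And>n. n \<ge> N \<Longrightarrow> norm (f n) \<le> real n powr \<delta>"
    by (auto simp: eventually_at_top_linorder)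
  have "eventually (\<lambda>p::nat. 4 * real p powr \<delta> \<le> real p powr \<sigma>) at_top"
    using assms(4) by real_asymp
  then obtain P where P: "\<And>p. p \<ge> P \<Longrightarrow> 4 * real p powr \<delta> \<le> real p powr \<sigma>"
    by (auto simp: eventually_at_top_linorder)
  have "summable (\<lambda>n. norm (D f n p) / real p powr (real n * \<sigma>)) \<and>
        (\<Sum>n. norm (D f n p) / real p powr (real n * \<sigma>)) \<le> 2"
    if "p \<ge> max (max N P) 1" for p
  proof -
    have "real p powr (real n * \<sigma>) = (real p powr \<sigma>) ^ n" for n
      using that by (simp add: powr_power mult.commute)
    then show ?thesis
      using summable_D_series_le_2[OF f1 _ norm_f_power_le[OF N] P, of p] that by simp
  qed
  then show ?thesis
    by (intro exI[of _ "{..<max (max N P) 1}"] conjI exI[of _ 2]) (auto simp: not_less)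
qed

end
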